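(* There exists a proper temporal graph $\mathcal G$ whose reachability graph is not isomorphic to the non-strict-journey reachability graph of any simple temporal graph $\mathcal H$. (For instance, $\mathcal G$ the path $a-b-c-d$ with $\lambda(ab)=\{2\}$, $\lambda(bc)=\{1,3\}$, $\lambda(cd)=\{2\}$, whose reachability graph has arcs in both directions between every pair of vertices except $a$ and $d$.)
   Context: A temporal graph is a triple $\mathcal G=(V,E,\lambda)$ where $V$ is a finite vertex set, $E$ is a set of undirected edges on $V$, and $\lambda:E\to 2^{\mathbb N}\setminus\{\emptyset\}$ assigns to each edge a nonempty set of presence times. The footprint of $\mathcal G$ is the static graph $(V,E)$. A contact is a pair $(e,t)$ with $e\in E$ and $t\in\lambda(e)$. A journey from $u$ to $v$ is a sequence of contacts $(e_1,t_1),\dots,(e_k,t_k)$, $k\ge 1$, such that $e_1,\dots,e_k$ form a path from $u$ to $v$ in the footprint and $t_1\le t_2\le\dots\le t_k$ (a non-strict journey); it is strict if $t_1<t_2<\dots<t_k$. $\mathcal G$ is proper if $\lambda(e)\cap\lambda(e')=\emptyset$ for any two distinct edges $e,e'$ sharing an endpoint (in a proper graph every journey is strict); simple if $|\lambda(e)|=1$ for every edge $e$. The reachability graph $\mathcal C(\mathcal G)$ (with respect to a chosen journey notion) is the directed graph on $V$ having an arc $(u,v)$, $u\neq v$, if and only if there is a journey from $u$ to $v$. Reachability graphs are compared up to isomorphism of directed graphs. *)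

theory Defs
  imports Main
begin

record 'a tgraph =
  tverts :: "'a set"
  tedges :: "'a set set"
  tlab   :: "'a set \<Rightarrow> nat set"

definition temporal_graph :: "'a tgraph \<Rightarrow> bool" where
  "temporal_graph G \<longleftrightarrow> finite (tverts G) \<and>
     (\<forall>e\<in>tedges G. e \<subseteq> tverts G \<and> card e = 2 \<and> tlab G e \<noteq> {})"

definition proper_tg :: "'a tgraph \<Rightarrow> bool" where
  "proper_tg G \<longleftrightarrow> (\<forall>e\<in>tedges G. \<forall>e'\<in>tedges G.
      e \<noteq> e' \<and> e \<inter> e' \<noteq> {} \<longrightarrow> tlab G e \<inter> tlab G e' = {})"

definition simple_tg :: "'a tgraph \<Rightarrow> bool" where
  "simple_tg G \<longleftrightarrow> (\<forall>e\<in>tedges G. card (tlab G e) = 1)"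

definition journey :: "bool \<Rightarrow> 'a tgraph \<Rightarrow> 'a \<Rightarrow> 'a \<Rightarrow> 'a list \<Rightarrow> nat list \<Rightarrow> bool" where
  "journey strict G u v vs ts \<longleftrightarrow>
     length vs \<ge> 2 \<and> length ts = length vs - 1 \<and> distinct vs \<and>
     hd vs = u \<and> last vs = v \<and>
     (\<forall>i < length ts. {vs ! i, vs ! Suc i} \<in> tedges G \<and> ts ! i \<in> tlab G {vs ! i, vs ! Suc i}) \<and>
     (\<forall>i. Suc i < length ts \<longrightarrow>
        (if strict then ts ! i < ts ! Suc i else ts ! i \<le> ts ! Suc i))"

definition has_journey :: "bool \<Rightarrow> 'a tgraph \<Rightarrow> 'a \<Rightarrow> 'a \<Rightarrow> bool" where
  "has_journey strict G u v \<longleftrightarrow> (\<exists>vs ts. journey strict G u v vs ts)"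

definition reach_arcs :: "bool \<Rightarrow> 'a tgraph \<Rightarrow> ('a \<times> 'a) set" where
  "reach_arcs strict G = {(u, v). u \<in> tverts G \<and> v \<in> tverts G \<and> u \<noteq> v \<and> has_journey strict G u v}"

definition digraph_iso :: "'a set \<Rightarrow> ('a \<times> 'a) set \<Rightarrow> 'b set \<Rightarrow> ('b \<times> 'b) set \<Rightarrow> bool" where
  "digraph_iso V1 A1 V2 A2 \<longleftrightarrow> (\<exists>f. bij_betw f V1 V2 \<and>
     (\<forall>u\<in>V1. \<forall>v\<in>V1. (u, v) \<in> A1 \<longleftrightarrow> (f u, f v) \<in> A2))"

end

theory Submission
  imports Defs
begin

text \<open>In G0 below, the path 0-1-2-3 with times 2, {1, 3}, 2, the ends 0 and 3 are mutually
  unreachable (a strict journey between them would need times 2 < t < 2), while every other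
  ordered pair is joined by a strict journey. Suppose a simple temporal graph on vertices
  x, y, p, q realises this pattern with non-strict journeys, x and y playing the ends. Then x and
  y are not adjacent, and they have no common neighbour: times of the two edges at it are
  comparable and give a journey one way or the other. So x and y have distinct private
  neighbours, say p and q, every journey between x and q runs through p, and journeys in both
  directions force the edges xp and pq to carry the same time. Symmetrically yq and qp do, so
  x-p-q-y is a journey at constant time, a contradiction.\<close>

lemma journey_ends_distinct:
  assumes "journey s G u v vs ts"
  shows "u \<noteq> v"
proof -
  from assms have "distinct vs" "2 \<le> length vs" "hd vs = u" "last vs = v"
    by (auto simp: journey_def)
  moreover have "vs \<noteq> []"
    using \<open>2 \<le> length vs\<close> by auto
  ultimately show ?thesis
    by (auto simp: hd_conv_nth last_conv_nth nth_eq_iff_index_eq)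
qed

lemma journey_single:
  assumes "{u, v} \<in> tedges G" "t \<in> tlab G {u, v}" "u \<noteq> v"
  shows "journey s G u v [u, v] [t]"
  using assms by (auto simp: journey_def)

lemma journey_Cons:
  assumes "journey s G w v vs ts" "{u, w} \<in> tedges G" "t \<in> tlab G {u, w}" "u \<notin> set vs"
    and "t \<le> hd ts" "s \<Longrightarrow> t < hd ts"
  shows "journey s G u v (u # vs) (t # ts)"
proof -
  have "ts \<noteq> []"
    using assms(1) by (auto simp: journey_def)
  then show ?thesis
    using assms unfolding journey_def by (auto simp: nth_Cons hd_conv_nth split: nat.split)
qed

lemma journey_ConsE:
  assumes "journey s G u v vs ts"
  obtains (edge) t where "vs = [u, v]" "ts = [t]" "{u, v} \<in> tedges G" "t \<in> tlab G {u, v}"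
  | (step) w t vs' ts' where "vs = u # w # vs'" "ts = t # ts'" "journey s G w v (w # vs') ts'"
      "{u, w} \<in> tedges G" "t \<in> tlab G {u, w}" "u \<notin> set (w # vs')"
      "t \<le> hd ts'" "s \<Longrightarrow> t < hd ts'"
proof -
  obtain w vs' t ts' where vs: "vs = u # w # vs'" and ts: "ts = t # ts'"
    using assms unfolding journey_def
    by (cases vs; cases "tl vs"; cases ts) auto
  from assms have edges: "\<forall>i < length ts. {vs ! i, vs ! Suc i} \<in> tedges G \<and>
      ts ! i \<in> tlab G {vs ! i, vs ! Suc i}"
    and times: "\<forall>i. Suc i < length ts \<longrightarrow>
      (if s then ts ! i < ts ! Suc i else ts ! i \<le> ts ! Suc i)"
    by (auto simp: journey_def)
  show thesis
  proof (cases "ts' = []")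
    case True
    then show thesis
      using assms edge[of t] unfolding journey_def vs ts by force
  next
    case False
    have "journey s G w v (w # vs') ts'"
      using assms False edges[rule_format, of "Suc _"] times[rule_format, of "Suc _"]
      unfolding journey_def vs ts by (auto simp: Suc_le_eq)
    moreover have "u \<notin> set (w # vs')"
      using assms by (simp add: journey_def vs)
    ultimately show thesis
      using step[of w vs' t ts'] False edges[rule_format, of 0] times[rule_format, of 0]
      unfolding vs ts by (auto simp: hd_conv_nth split: if_splits)
  qed
qed

lemma journey_forced_edge:
  assumes "journey s G u v vs ts"
    and "\<forall>z. {u, z} \<in> tedges G \<longrightarrow> z = v \<or> z \<notin> set vs"
  obtains t where "ts = [t]" "{u, v} \<in> tedges G" "t \<in> tlab G {u, v}"
  using assms(1)
proof (cases rule: journey_ConsE)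
  case (step w t vs' ts')
  then show thesis
    using assms(2) journey_ends_distinct[of s G w v] by auto
qed

lemma journey_forced_step:
  assumes "journey s G u v vs ts"
    and "\<forall>z. {u, z} \<in> tedges G \<longrightarrow> z = w \<or> z \<notin> set vs" and "w \<noteq> v"
  obtains t vs' ts' where "vs = u # w # vs'" "ts = t # ts'" "journey s G w v (w # vs') ts'"
    "u \<notin> set (w # vs')"
    "{u, w} \<in> tedges G" "t \<in> tlab G {u, w}" "t \<le> hd ts'" "s \<Longrightarrow> t < hd ts'"
  using assms(1)
proof (cases rule: journey_ConsE)
  case (edge t)
  then show thesis
    using assms(2,3) by auto
next
  case (step w' t vs' ts')
  then show thesis
    using that assms(2) by auto
qed

lemma journey_forced_two_steps:
  assumes J: "journey s G u v vs ts"
    and "\<forall>z. {u, z} \<in> tedges G \<longrightarrow> z = w \<or> z \<notin> set vs"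
    and "\<forall>z. {w, z} \<in> tedges G \<longrightarrow> z = u \<or> z = v \<or> z \<notin> set vs" and "w \<noteq> v"
  obtains t t' where "ts = [t, t']" "{u, w} \<in> tedges G" "t \<in> tlab G {u, w}"
    "{w, v} \<in> tedges G" "t' \<in> tlab G {w, v}" "t \<le> t'" "s \<Longrightarrow> t < t'"
proof -
  obtain t vs' ts' where vs: "vs = u # w # vs'" and "ts = t # ts'"
    and J': "journey s G w v (w # vs') ts'" and u: "u \<notin> set (w # vs')"
    and "{u, w} \<in> tedges G" "t \<in> tlab G {u, w}" "t \<le> hd ts'" "s \<Longrightarrow> t < hd ts'"
    using journey_forced_step[OF J assms(2,4)] by metis
  moreover have "\<forall>z. {w, z} \<in> tedges G \<longrightarrow> z = v \<or> z \<notin> set (w # vs')"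
    using assms(3) u unfolding vs by force
  then obtain t' where "ts' = [t']" "{w, v} \<in> tedges G" "t' \<in> tlab G {w, v}"
    by (rule journey_forced_edge[OF J'])
  ultimately show thesis
    using that by (cases s) auto
qed

lemma temporal_graph_edgeD:
  assumes "temporal_graph G" "{u, v} \<in> tedges G"
  shows "u \<in> tverts G" "v \<in> tverts G" "u \<noteq> v" "tlab G {u, v} \<noteq> {}"
  using assms by (auto simp: temporal_graph_def card_2_iff doubleton_eq_iff)

lemma simple_tg_lab_eq:
  assumes "simple_tg G" "e \<in> tedges G" "t \<in> tlab G e"
  shows "tlab G e = {t}"
  using assms by (auto simp: simple_tg_def card_1_singleton_iff)

lemma has_journey_edge:
  assumes "temporal_graph G" "{u, v} \<in> tedges G"
  shows "has_journey s G u v"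
  using journey_single[OF assms(2)] temporal_graph_edgeD[OF assms]
  unfolding has_journey_def by blast

lemma has_journey_common_neighbour:
  assumes G: "temporal_graph G" and ab: "{a, b} \<in> tedges G" and bc: "{b, c} \<in> tedges G"
    and "a \<noteq> c"
  shows "has_journey False G a c \<or> has_journey False G c a"
proof -
  obtain t t' where t: "t \<in> tlab G {a, b}" and t': "t' \<in> tlab G {b, c}"
    using temporal_graph_edgeD(4)[OF G ab] temporal_graph_edgeD(4)[OF G bc] by blast
  have cb: "{c, b} \<in> tedges G" "t' \<in> tlab G {c, b}" and ba: "{b, a} \<in> tedges G" "t \<in> tlab G {b, a}"
    using ab bc t t' by (simp_all add: insert_commute)
  have "a \<noteq> b" "b \<noteq> c"
    using temporal_graph_edgeD(3)[OF G ab] temporal_graph_edgeD(3)[OF G bc] by auto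
  then have "journey False G b c [b, c] [t']" "journey False G b a [b, a] [t]"
    using bc t' ba by (simp_all add: journey_single)
  then have "t \<le> t' \<Longrightarrow> journey False G a c [a, b, c] [t, t']"
    and "t' \<le> t \<Longrightarrow> journey False G c a [c, b, a] [t', t]"
    using journey_Cons[of False G b _ "[b, _]"] ab t cb \<open>a \<noteq> b\<close> \<open>b \<noteq> c\<close> \<open>a \<noteq> c\<close> by auto
  then show ?thesis
    unfolding has_journey_def by (meson nle_le)
qed

lemma has_journey_first_edge:
  assumes "has_journey s G u v"
  obtains w where "{u, w} \<in> tedges G"
  using assms unfolding has_journey_def by (metis journey_ConsE)

lemma journey_back_through_relay:
  assumes "journey s G q x vs ts" and dist: "distinct [x, y, p, q]"
    and Nq: "\<forall>z. {q, z} \<in> tedges G \<longrightarrow> z = y \<or> z = p"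
    and Ny: "\<forall>z. {y, z} \<in> tedges G \<longrightarrow> z = q"
    and Np: "\<forall>z. {p, z} \<in> tedges G \<longrightarrow> z = x \<or> z = q"
  obtains t t' where "t \<in> tlab G {q, p}" "t' \<in> tlab G {p, x}" "t \<le> t'"
  using assms(1)
proof (cases rule: journey_ConsE)
  case edge
  then show thesis
    using Nq dist by auto
next
  case (step w t vs' ts')
  then have "w = y \<or> w = p"
    using Nq by blast
  then show thesis
  proof
    assume "w = y"
    with step have "journey s G y x (y # vs') ts'"
      and "\<forall>z. {y, z} \<in> tedges G \<longrightarrow> z = x \<or> z \<notin> set (y # vs')"
      using Ny by auto
    then have "{y, x} \<in> tedges G"
      by (rule journey_forced_edge)
    with Ny dist show thesis
      by auto
  next
    assume "w = p"
    with step have "journey s G p x (p # vs') ts'"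
      and "\<forall>z. {p, z} \<in> tedges G \<longrightarrow> z = x \<or> z \<notin> set (p # vs')"
      using Np by auto
    then obtain t' where "ts' = [t']" "t' \<in> tlab G {p, x}"
      by (rule journey_forced_edge)
    with step \<open>w = p\<close> show thesis
      using that[of t t'] by simp
  qed
qed

lemma four_vertices_relay_neighbourhoods:
  assumes H: "temporal_graph H"
    and V: "tverts H = {x, y, p, q}" and "distinct [x, y, p, q]"
    and "{x, y} \<notin> tedges H" "{x, q} \<notin> tedges H" "{y, p} \<notin> tedges H"
  shows "\<forall>z. {x, z} \<in> tedges H \<longrightarrow> z = p" "\<forall>z. {y, z} \<in> tedges H \<longrightarrow> z = q"
    "\<forall>z. {p, z} \<in> tedges H \<longrightarrow> z = x \<or> z = q" "\<forall>z. {q, z} \<in> tedges H \<longrightarrow> z = y \<or> z = p"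
proof -
  have nbr: "z \<in> {x, y, p, q} - {v}" if "{v, z} \<in> tedges H" for v z
    using temporal_graph_edgeD[OF H that] V by auto
  moreover have "{y, x} \<notin> tedges H" "{p, y} \<notin> tedges H" "{q, x} \<notin> tedges H"
    using assms(4-6) by (simp_all add: insert_commute)
  ultimately show "\<forall>z. {x, z} \<in> tedges H \<longrightarrow> z = p" "\<forall>z. {y, z} \<in> tedges H \<longrightarrow> z = q"
    "\<forall>z. {p, z} \<in> tedges H \<longrightarrow> z = x \<or> z = q" "\<forall>z. {q, z} \<in> tedges H \<longrightarrow> z = y \<or> z = p"
    using assms(4-6) by fastforce+
qed

lemma mutual_journeys_force_equal_times:
  assumes H: "temporal_graph H" "simple_tg H"
    and V: "tverts H = {x, y, p, q}" and dist: "distinct [x, y, p, q]"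
    and "{x, y} \<notin> tedges H" "{x, q} \<notin> tedges H" "{y, p} \<notin> tedges H"
    and "has_journey False H x q" "has_journey False H q x"
  shows "{x, p} \<in> tedges H" "{p, q} \<in> tedges H" "tlab H {x, p} = tlab H {p, q}"
proof -
  note N = four_vertices_relay_neighbourhoods[OF H(1) V dist assms(5-7)]
  obtain t1 t2 where xp: "{x, p} \<in> tedges H" "t1 \<in> tlab H {x, p}"
    and pq: "{p, q} \<in> tedges H" "t2 \<in> tlab H {p, q}" and "t1 \<le> t2"
  proof -
    obtain vs ts where J: "journey False H x q vs ts"
      using \<open>has_journey False H x q\<close> unfolding has_journey_def by blast
    have "\<forall>z. {x, z} \<in> tedges H \<longrightarrow> z = p \<or> z \<notin> set vs"
      and "\<forall>z. {p, z} \<in> tedges H \<longrightarrow> z = x \<or> z = q \<or> z \<notin> set vs" and "p \<noteq> q"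
      using N dist by auto
    then show thesis
      by (rule journey_forced_two_steps[OF J]) (blast intro: that)
  qed
  obtain vs ts where "journey False H q x vs ts"
    using \<open>has_journey False H q x\<close> unfolding has_journey_def by blast
  then obtain t3 t4 where "t3 \<in> tlab H {p, q}" "t4 \<in> tlab H {x, p}" "t3 \<le> t4"
    by (rule journey_back_through_relay[OF _ dist N(4,2,3)]) (simp add: insert_commute)
  then show "{x, p} \<in> tedges H" "{p, q} \<in> tedges H" "tlab H {x, p} = tlab H {p, q}"
    using xp pq \<open>t1 \<le> t2\<close> simple_tg_lab_eq[OF H(2)] by (metis le_antisym singleton_inject)+
qed

lemma has_journey_through_relays:
  assumes H: "temporal_graph H" "simple_tg H"
    and V: "tverts H = {x, y, p, q}" and dist: "distinct [x, y, p, q]"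
    and xy: "{x, y} \<notin> tedges H" and xq: "{x, q} \<notin> tedges H" and yp: "{y, p} \<notin> tedges H"
    and xq_reach: "has_journey False H x q" "has_journey False H q x"
    and yp_reach: "has_journey False H y p" "has_journey False H p y"
  shows "has_journey False H x y"
proof -
  have xp: "{x, p} \<in> tedges H" and "{p, q} \<in> tedges H" and "tlab H {x, p} = tlab H {p, q}"
    using mutual_journeys_force_equal_times[OF H V dist xy xq yp xq_reach] by auto
  moreover have "{y, q} \<in> tedges H" and "tlab H {y, q} = tlab H {q, p}"
  proof -
    have "tverts H = {y, x, q, p}" "distinct [y, x, q, p]" "{y, x} \<notin> tedges H"
      using V dist xy by (auto simp: insert_commute)
    then show "{y, q} \<in> tedges H" "tlab H {y, q} = tlab H {q, p}"
      using mutual_journeys_force_equal_times[OF H _ _ _ yp xq yp_reach] by auto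
  qed
  moreover obtain t where "t \<in> tlab H {x, p}"
    using temporal_graph_edgeD(4)[OF H(1) xp] by blast
  ultimately have "journey False H x y [x, p, q, y] [t, t, t]"
    using dist by (auto simp: journey_def less_Suc_eq insert_commute numeral_2_eq_2)
  then show ?thesis
    unfolding has_journey_def by blast
qed

lemma simple_tg_four_vertices_reach_pair:
  assumes H: "temporal_graph H" "simple_tg H"
    and V: "tverts H = {x, y, p, q}" and dist: "distinct [x, y, p, q]"
    and reach: "\<forall>u\<in>{x, y}. \<forall>v\<in>{p, q}. has_journey False H u v \<and> has_journey False H v u"
  shows "has_journey False H x y \<or> has_journey False H y x"
proof (rule ccontr)
  assume "\<not> ?thesis"
  then have xy_unreach: "\<not> has_journey False H x y" "\<not> has_journey False H y x"
    by auto
  have xy: "{x, y} \<notin> tedges H"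
    using has_journey_edge[OF H(1)] xy_unreach by blast
  have no_common: False if "{x, b} \<in> tedges H" "{y, b} \<in> tedges H" for b
    using has_journey_common_neighbour[OF H(1) that(1), of y] that(2) dist xy_unreach
    by (simp add: insert_commute)
  have nbr: "z = p \<or> z = q" if "{u, z} \<in> tedges H" "u \<in> {x, y}" for u z
    using temporal_graph_edgeD[OF H(1) that(1)] that V xy by (auto simp: insert_commute)
  obtain a where xa: "{x, a} \<in> tedges H"
    using reach has_journey_first_edge[of False H x p] by auto
  obtain b where yb: "{y, b} \<in> tedges H"
    using reach has_journey_first_edge[of False H y p] by auto
  have "a \<noteq> b"
    using no_common xa yb by blast
  then consider "{x, p} \<in> tedges H" "{y, q} \<in> tedges H" | "{x, q} \<in> tedges H" "{y, p} \<in> tedges H"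
    using nbr[OF xa] nbr[OF yb] xa yb by auto
  then show False
  proof cases
    case 1
    then have "{x, q} \<notin> tedges H" "{y, p} \<notin> tedges H"
      using no_common by blast+
    then show False
      using has_journey_through_relays[OF H V dist xy] reach xy_unreach by blast
  next
    case 2
    then have "{x, p} \<notin> tedges H" "{y, q} \<notin> tedges H"
      using no_common by blast+
    moreover have "tverts H = {x, y, q, p}" "distinct [x, y, q, p]"
      using V dist by auto
    ultimately show False
      using has_journey_through_relays[OF H _ _ xy] reach xy_unreach by blast
  qed
qed

lemma digraph_iso_reach_arcsE:
  assumes "digraph_iso (tverts G) (reach_arcs s G) (tverts H) (reach_arcs s' H)"
  obtains f where "bij_betw f (tverts G) (tverts H)"
    "\<And>u v. u \<in> tverts G \<Longrightarrow> v \<in> tverts G \<Longrightarrow> u \<noteq> v \<Longrightarrow>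
       has_journey s G u v \<longleftrightarrow> has_journey s' H (f u) (f v)"
proof -
  obtain f where bij: "bij_betw f (tverts G) (tverts H)"
    and arcs: "\<forall>u\<in>tverts G. \<forall>v\<in>tverts G. (u, v) \<in> reach_arcs s G \<longleftrightarrow> (f u, f v) \<in> reach_arcs s' H"
    using assms unfolding digraph_iso_def by blast
  have "has_journey s G u v \<longleftrightarrow> has_journey s' H (f u) (f v)"
    if "u \<in> tverts G" "v \<in> tverts G" "u \<noteq> v" for u v
  proof -
    have "f u \<noteq> f v" "f u \<in> tverts H" "f v \<in> tverts H"
      using bij that by (auto simp: bij_betw_def inj_on_eq_iff)
    then show ?thesis
      using arcs that unfolding reach_arcs_def by auto
  qed
  with bij show thesis
    using that by blast
qed

definition G0 :: "nat tgraph" where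
  "G0 = \<lparr>tverts = {0, 1, 2, 3}, tedges = {{0, 1}, {1, 2}, {2, 3}},
         tlab = (\<lambda>e. if e = {1, 2} then {1, 3} else {2})\<rparr>"

lemma G0_temporal_graph: "temporal_graph G0"
  by (auto simp: temporal_graph_def G0_def)

lemma G0_proper: "proper_tg G0"
  by (auto simp: proper_tg_def G0_def doubleton_eq_iff)

lemma G0_strict_journeys:
  assumes "u \<in> {0, 3}" "v \<in> {1, 2}"
  shows "has_journey True G0 u v \<and> has_journey True G0 v u"
proof -
  have "journey True G0 0 1 [0, 1] [2]" "journey True G0 1 0 [1, 0] [2]"
    "journey True G0 0 2 [0, 1, 2] [2, 3]" "journey True G0 2 0 [2, 1, 0] [1, 2]"
    "journey True G0 3 2 [3, 2] [2]" "journey True G0 2 3 [2, 3] [2]"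
    "journey True G0 3 1 [3, 2, 1] [2, 3]" "journey True G0 1 3 [1, 2, 3] [1, 2]"
    by (auto simp: journey_def G0_def less_Suc_eq numeral_2_eq_2 doubleton_eq_iff)
  then show ?thesis
    using assms unfolding has_journey_def by blast
qed

lemma G0_no_strict_journey_between_ends:
  fixes a b c d :: nat
  assumes "(a, b, c, d) \<in> {(0, 1, 2, 3), (3, 2, 1, 0)}"
  shows "\<not> has_journey True G0 a d"
proof
  assume "has_journey True G0 a d"
  then obtain vs ts where J: "journey True G0 a d vs ts"
    unfolding has_journey_def by blast
  have Na: "\<forall>z. {a, z} \<in> tedges G0 \<longrightarrow> z = b"
    and Nb: "\<forall>z. {b, z} \<in> tedges G0 \<longrightarrow> z = a \<or> z = c"
    and Nc: "\<forall>z. {c, z} \<in> tedges G0 \<longrightarrow> z = b \<or> z = d"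
    and "b \<noteq> d" "c \<noteq> d"
    and ab: "tlab G0 {a, b} = {2}" and bc: "tlab G0 {b, c} = {1, 3}" and cd: "tlab G0 {c, d} = {2}"
    using assms by (auto simp: G0_def doubleton_eq_iff)
  have "\<forall>z. {a, z} \<in> tedges G0 \<longrightarrow> z = b \<or> z \<notin> set vs"
    using Na by blast
  then obtain t1 vs1 ts1 where J1: "journey True G0 b d (b # vs1) ts1" and "a \<notin> set (b # vs1)"
    and "t1 \<in> tlab G0 {a, b}" "t1 < hd ts1"
    using journey_forced_step[OF J _ \<open>b \<noteq> d\<close>] by metis
  then have "\<forall>z. {b, z} \<in> tedges G0 \<longrightarrow> z = c \<or> z \<notin> set (b # vs1)"
    and "\<forall>z. {c, z} \<in> tedges G0 \<longrightarrow> z = b \<or> z = d \<or> z \<notin> set (b # vs1)"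
    using Nb Nc by auto
  then obtain t2 t3 where "ts1 = [t2, t3]" "t2 \<in> tlab G0 {b, c}" "t3 \<in> tlab G0 {c, d}" "t2 < t3"
    by (rule journey_forced_two_steps[OF J1 _ _ \<open>c \<noteq> d\<close>]) blast
  then show False
    using \<open>t1 \<in> tlab G0 {a, b}\<close> \<open>t1 < hd ts1\<close> ab bc cd by auto
qed

theorem mainTheorem5:
  shows "\<exists>G :: nat tgraph. temporal_graph G \<and> proper_tg G \<and>
           (\<forall>H :: nat tgraph. temporal_graph H \<and> simple_tg H \<longrightarrow>
              \<not> digraph_iso (tverts G) (reach_arcs True G) (tverts H) (reach_arcs False H))"
proof (intro exI[of _ G0] conjI allI impI notI G0_temporal_graph G0_proper)
  fix H :: "nat tgraph"
  assume H: "temporal_graph H \<and> simple_tg H"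
    and "digraph_iso (tverts G0) (reach_arcs True G0) (tverts H) (reach_arcs False H)"
  then obtain f where bij: "bij_betw f {0, 1, 2, 3} (tverts H)"
    and reach: "\<And>u v. u \<in> {0, 1, 2, 3} \<Longrightarrow> v \<in> {0, 1, 2, 3} \<Longrightarrow> u \<noteq> v \<Longrightarrow>
      has_journey True G0 u v \<longleftrightarrow> has_journey False H (f u) (f v)"
    by (elim digraph_iso_reach_arcsE) (simp add: G0_def)
  have V: "tverts H = {f 0, f 3, f 1, f 2}" and dist: "distinct [f 0, f 3, f 1, f 2]"
    using bij by (auto simp: bij_betw_def inj_on_def)
  have "has_journey False H (f u) (f v) \<and> has_journey False H (f v) (f u)"
    if "u \<in> {0, 3}" "v \<in> {1, 2}" for u v
    using reach[of u v] reach[of v u] G0_strict_journeys[OF that] that by auto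
  then have "\<forall>u\<in>{f 0, f 3}. \<forall>v\<in>{f 1, f 2}. has_journey False H u v \<and> has_journey False H v u"
    by blast
  then have "has_journey False H (f 0) (f 3) \<or> has_journey False H (f 3) (f 0)"
    using simple_tg_four_vertices_reach_pair[OF _ _ V dist] H by blast
  then show False
    using reach[of 0 3] reach[of 3 0] G0_no_strict_journey_between_ends[of 0 1 2 3]
      G0_no_strict_journey_between_ends[of 3 2 1 0] by auto
qed

end
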